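(* Fix a real number $\alpha>1$. Then there exists a constant $C>0$ such that, for any $f\in B^{\alpha\log}_{\infty,\infty}(\mathbb{R}^d)$, \[ \|f\|_{B^0_{\infty,1}}\le C\,\|f\|_{B^0_{\infty,\infty}}^{1-1/\alpha}\,\|f\|_{B^{\alpha\log}_{\infty,\infty}}^{1/\alpha}. \]
   Context: Littlewood–Paley decomposition on $\mathbb{R}^d$: let $\chi$ be a smooth radial function supported in $B(0,2)$, equal to $1$ near $B(0,1)$, with $r\mapsto\chi(re)$ nonincreasing for unit vectors $e$; set $\varphi(\xi)=\chi(\xi)-\chi(2\xi)$, $\Delta_{-1}=\chi(D)$, $\Delta_j=\varphi(2^{-j}D)$ for $j\ge0$. For $s,\alpha\in\mathbb{R}$, $p,r\in[1,\infty]$, the logarithmic Besov space $B^{s+\alpha\log}_{p,r}$ is the set of tempered distributions $f$ with $\|f\|_{B^{s+\alpha\log}_{p,r}}:=\|(2^{js}(2+j)^{\alpha}\|\Delta_jf\|_{L^p})_{j\ge-1}\|_{\ell^r}<\infty$; $B^{\alpha\log}_{p,r}:=B^{0+\alpha\log}_{p,r}$ and $B^s_{p,r}:=B^{s+0\log}_{p,r}$. *)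

theory Defs
  imports "HOL-Analysis.Analysis"
begin

fun iter_pderiv :: "'n::finite list \<Rightarrow> (real^'n \<Rightarrow> real) \<Rightarrow> real^'n \<Rightarrow> real" where
  "iter_pderiv [] f = f"
| "iter_pderiv (i # is) f = (\<lambda>x. deriv (\<lambda>t. iter_pderiv is f (x + t *\<^sub>R axis i 1)) 0)"

definition smooth_fun :: "(real^'n::finite \<Rightarrow> real) \<Rightarrow> bool" where
  "smooth_fun f \<longleftrightarrow>
     (\<forall>is. continuous_on UNIV (iter_pderiv is f)) \<and>
     (\<forall>is i x. (\<lambda>t. iter_pderiv is f (x + t *\<^sub>R axis i 1)) differentiable (at 0))"

definition LP_cutoff :: "(real^'n::finite \<Rightarrow> real) \<Rightarrow> bool" where
  "LP_cutoff chi \<longleftrightarrow>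
     smooth_fun chi \<and>
     (\<forall>\<xi> \<eta>. norm \<xi> = norm \<eta> \<longrightarrow> chi \<xi> = chi \<eta>) \<and>
     closure {\<xi>. chi \<xi> \<noteq> 0} \<subseteq> ball 0 2 \<and>
     (\<exists>\<epsilon>>0. \<forall>\<xi>. norm \<xi> < 1 + \<epsilon> \<longrightarrow> chi \<xi> = 1) \<and>
     (\<forall>e r1 r2. norm e = 1 \<longrightarrow> 0 \<le> r1 \<longrightarrow> r1 \<le> r2 \<longrightarrow> chi (r2 *\<^sub>R e) \<le> chi (r1 *\<^sub>R e))"

definition LP_symbol :: "(real^'n::finite \<Rightarrow> real) \<Rightarrow> int \<Rightarrow> real^'n \<Rightarrow> real" where
  "LP_symbol chi j \<xi> =
     (if j = -1 then chi \<xi>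
      else if j \<ge> 0 then chi ((2 powr (- real_of_int j)) *\<^sub>R \<xi>) - chi ((2 * 2 powr (- real_of_int j)) *\<^sub>R \<xi>)
      else 0)"

text \<open>Convolution kernel: inverse Fourier transform of the symbol,
  with the convention hat f(xi) = integral of exp(-i x.xi) f(x) dx.\<close>
definition LP_kernel :: "(real^'n::finite \<Rightarrow> real) \<Rightarrow> int \<Rightarrow> real^'n \<Rightarrow> complex" where
  "LP_kernel chi j x =
     complex_of_real (1 / (2 * pi) ^ CARD('n)) *
       (\<integral>\<xi>. cis (x \<bullet> \<xi>) * complex_of_real (LP_symbol chi j \<xi>) \<partial>lborel)"

definition LP_block :: "(real^'n::finite \<Rightarrow> real) \<Rightarrow> int \<Rightarrow> (real^'n \<Rightarrow> complex) \<Rightarrow> real^'n \<Rightarrow> complex" where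
  "LP_block chi j f x = (\<integral>y. LP_kernel chi j y * f (x - y) \<partial>lborel)"

text \<open>L-infinity norm of Delta_j f (Delta_j f is continuous, so the sup equals the ess sup).\<close>
definition LP_sup :: "(real^'n::finite \<Rightarrow> real) \<Rightarrow> int \<Rightarrow> (real^'n \<Rightarrow> complex) \<Rightarrow> ennreal" where
  "LP_sup chi j f = (SUP x. ennreal (cmod (LP_block chi j f x)))"

text \<open>Logarithmic Besov norms B^{s+alpha log}_{infty,r} for r = infinity and r = 1;
  index k :: nat corresponds to j = k - 1 >= -1.\<close>
definition besov_log_inf_inf :: "(real^'n::finite \<Rightarrow> real) \<Rightarrow> real \<Rightarrow> real \<Rightarrow> (real^'n \<Rightarrow> complex) \<Rightarrow> ennreal" where
  "besov_log_inf_inf chi s \<alpha> f =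
     (SUP k::nat. ennreal (2 powr ((real k - 1) * s) * (real k + 1) powr \<alpha>) * LP_sup chi (int k - 1) f)"

definition besov_log_inf_1 :: "(real^'n::finite \<Rightarrow> real) \<Rightarrow> real \<Rightarrow> real \<Rightarrow> (real^'n \<Rightarrow> complex) \<Rightarrow> ennreal" where
  "besov_log_inf_1 chi s \<alpha> f =
     (\<Sum>k::nat. ennreal (2 powr ((real k - 1) * s) * (real k + 1) powr \<alpha>) * LP_sup chi (int k - 1) f)"

end

theory Submission
  imports Defs
begin

text \<open>Only the sizes a(k) = sup |\<Delta>(k-1) f| of the blocks matter. Split the series at N \<approx> (B/A) powr (1/\<alpha>): the first N terms
  contribute at most N A, the tail at most B \<Sum>k\<ge>N. (k+1) powr (-\<alpha>) \<le> B N powr (1-\<alpha>)/(\<alpha>-1),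
  and for this choice of N both bounds are of order A powr (1 - 1/\<alpha>) * B powr (1/\<alpha>).\<close>

lemma powr_neg_le_telescoping_diff:
  fixes \<alpha> m :: real
  assumes "\<alpha> > 1" and "m > 0"
  shows "(m + 1) powr (-\<alpha>) \<le> (m powr (1 - \<alpha>) - (m + 1) powr (1 - \<alpha>)) / (\<alpha> - 1)"
proof -
  have "\<exists>z. m < z \<and> z < m + 1 \<and>
      (m + 1) powr (1 - \<alpha>) - m powr (1 - \<alpha>) = (m + 1 - m) * ((1 - \<alpha>) * z powr (1 - \<alpha> - 1))"
    using \<open>m > 0\<close> by (intro MVT2 has_real_derivative_powr) auto
  then obtain z where z: "m < z" "z < m + 1"
    and mvt: "(m + 1) powr (1 - \<alpha>) - m powr (1 - \<alpha>) = (1 - \<alpha>) * z powr (-\<alpha>)"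
    by auto
  have "(\<alpha> - 1) * (m + 1) powr (-\<alpha>) \<le> (\<alpha> - 1) * z powr (-\<alpha>)"
    using z \<open>m > 0\<close> \<open>\<alpha> > 1\<close> by (intro mult_left_mono powr_mono2') auto
  also have "\<dots> = m powr (1 - \<alpha>) - (m + 1) powr (1 - \<alpha>)"
    using mvt by (simp add: algebra_simps)
  finally show ?thesis
    using \<open>\<alpha> > 1\<close> by (simp add: pos_le_divide_eq mult.commute)
qed

lemma sum_powr_neg_tail_le:
  fixes \<alpha> :: real
  assumes "\<alpha> > 1" and "N \<ge> 1"
  shows "(\<Sum>k = N..<n. (real k + 1) powr (-\<alpha>)) \<le> real N powr (1 - \<alpha>) / (\<alpha> - 1)"
proof (cases "N \<le> n")
  case True
  define g where "g k = - (real k powr (1 - \<alpha>)) / (\<alpha> - 1)" for k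
  have "(\<Sum>k = N..<n. (real k + 1) powr (-\<alpha>)) \<le> (\<Sum>k = N..<n. g (Suc k) - g k)"
  proof (intro sum_mono)
    fix k assume "k \<in> {N..<n}"
    then have "real k > 0" using \<open>N \<ge> 1\<close> by auto
    then have "(real k + 1) powr (-\<alpha>) \<le> (real k powr (1 - \<alpha>) - (real k + 1) powr (1 - \<alpha>)) / (\<alpha> - 1)"
      by (rule powr_neg_le_telescoping_diff[OF \<open>\<alpha> > 1\<close>])
    also have "\<dots> = g (Suc k) - g k"
      by (simp add: g_def diff_divide_distrib add.commute)
    finally show "(real k + 1) powr (-\<alpha>) \<le> g (Suc k) - g k" .
  qed
  also have "\<dots> = g n - g N"
    using True by (rule sum_Suc_diff')
  also have "\<dots> \<le> real N powr (1 - \<alpha>) / (\<alpha> - 1)"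
    using \<open>\<alpha> > 1\<close> by (simp add: g_def)
  finally show ?thesis .
qed (use \<open>\<alpha> > 1\<close> in simp)

lemma sum_le_split_bound:
  fixes \<alpha> A B :: real and r :: "nat \<Rightarrow> real"
  assumes "\<alpha> > 1" and "N \<ge> 1" and r_nonneg: "\<And>k. 0 \<le> r k" and r_le: "\<And>k. r k \<le> A"
    and weighted_r_le: "\<And>k. (real k + 1) powr \<alpha> * r k \<le> B"
  shows "(\<Sum>k<n. r k) \<le> real N * A + B * real N powr (1 - \<alpha>) / (\<alpha> - 1)"
proof -
  define m where "m = max n N"
  have "(\<Sum>k<n. r k) \<le> (\<Sum>k<m. r k)"
    using r_nonneg by (intro sum_mono2) (auto simp: m_def)
  also have "\<dots> = (\<Sum>k<N. r k) + (\<Sum>k = N..<m. r k)"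
    using sum.atLeastLessThan_concat[of 0 N m r] by (simp add: m_def atLeast0LessThan)
  also have "(\<Sum>k<N. r k) \<le> real N * A"
    using sum_mono[of "{..<N}" r "\<lambda>_. A"] r_le by simp
  also have "(\<Sum>k = N..<m. r k) \<le> (\<Sum>k = N..<m. B * (real k + 1) powr (-\<alpha>))"
    using weighted_r_le by (intro sum_mono) (simp add: powr_minus field_simps)
  also have "\<dots> \<le> B * (real N powr (1 - \<alpha>) / (\<alpha> - 1))"
    unfolding sum_distrib_left[symmetric]
    using sum_powr_neg_tail_le[OF \<open>\<alpha> > 1\<close> \<open>N \<ge> 1\<close>] r_nonneg[of 0] weighted_r_le[of 0]
    by (intro mult_left_mono) auto
  finally show ?thesis by simp
qed

lemma powr_balance:
  fixes \<alpha> A B :: real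
  assumes "A > 0" and "B > 0" and "\<alpha> \<noteq> 0"
  shows "(B / A) powr (1 / \<alpha>) * A = A powr (1 - 1 / \<alpha>) * B powr (1 / \<alpha>)"
    and "B * ((B / A) powr (1 / \<alpha>)) powr (1 - \<alpha>) = A powr (1 - 1 / \<alpha>) * B powr (1 / \<alpha>)"
proof -
  have "A / A powr (1 / \<alpha>) = A powr (1 - 1 / \<alpha>)"
    using \<open>A > 0\<close> by (simp add: powr_diff)
  then show t_A: "(B / A) powr (1 / \<alpha>) * A = A powr (1 - 1 / \<alpha>) * B powr (1 / \<alpha>)"
    using assms by (simp add: powr_divide field_simps)
  have "((B / A) powr (1 / \<alpha>)) powr (1 - \<alpha>) = (B / A) powr (1 / \<alpha> - 1)"
    using \<open>\<alpha> \<noteq> 0\<close> by (simp add: powr_powr right_diff_distrib)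
  also have "\<dots> = (B / A) powr (1 / \<alpha>) / (B / A)"
    using assms by (simp add: powr_diff)
  finally show "B * ((B / A) powr (1 / \<alpha>)) powr (1 - \<alpha>) = A powr (1 - 1 / \<alpha>) * B powr (1 / \<alpha>)"
    using t_A assms by (simp add: field_simps)
qed

lemma sum_le_interpolation:
  fixes \<alpha> A B :: real and r :: "nat \<Rightarrow> real"
  assumes "\<alpha> > 1" and r_nonneg: "\<And>k. 0 \<le> r k" and r_le: "\<And>k. r k \<le> A"
    and weighted_r_le: "\<And>k. (real k + 1) powr \<alpha> * r k \<le> B" and "A \<le> B"
  shows "(\<Sum>k<n. r k) \<le> (1 + 2 powr (\<alpha> - 1) / (\<alpha> - 1)) * A powr (1 - 1 / \<alpha>) * B powr (1 / \<alpha>)"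
proof (cases "A = 0")
  case True
  then have "r k = 0" for k
    using r_nonneg r_le by (meson order_antisym)
  then show ?thesis using \<open>A = 0\<close> by simp
next
  case False
  then have "A > 0" "B > 0"
    using r_nonneg[of 0] r_le[of 0] \<open>A \<le> B\<close> by linarith+
  define P where "P = A powr (1 - 1 / \<alpha>) * B powr (1 / \<alpha>)"
  define t where "t = (B / A) powr (1 / \<alpha>)"
  define N where "N = nat \<lfloor>t\<rfloor>"
  have "t \<ge> 1"
    unfolding t_def using \<open>A > 0\<close> \<open>A \<le> B\<close> \<open>\<alpha> > 1\<close> by (intro ge_one_powr_ge_zero) auto
  then have "N \<ge> 1" "real N \<le> t" "t < real N + 1"
    by (auto simp: N_def le_nat_iff)
  then have "t / 2 \<le> real N"
    by linarith
  have t_A: "t * A = P" and B_t: "B * t powr (1 - \<alpha>) = P"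
    using powr_balance[OF \<open>A > 0\<close> \<open>B > 0\<close>] \<open>\<alpha> > 1\<close> by (simp_all add: P_def t_def)
  have "real N powr (1 - \<alpha>) \<le> (t / 2) powr (1 - \<alpha>)"
    using \<open>t / 2 \<le> real N\<close> \<open>t \<ge> 1\<close> \<open>\<alpha> > 1\<close> by (intro powr_mono2') auto
  also have "\<dots> = t powr (1 - \<alpha>) / 2 powr (1 - \<alpha>)"
    using \<open>t \<ge> 1\<close> by (simp add: powr_divide)
  also have "\<dots> = 2 powr (\<alpha> - 1) * t powr (1 - \<alpha>)"
    using powr_minus_divide[of 2 "1 - \<alpha>"] by simp
  finally have "B * real N powr (1 - \<alpha>) / (\<alpha> - 1)
      \<le> B * (2 powr (\<alpha> - 1) * t powr (1 - \<alpha>)) / (\<alpha> - 1)"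
    using \<open>B > 0\<close> \<open>\<alpha> > 1\<close> by (intro divide_right_mono mult_left_mono) auto
  also have "\<dots> = 2 powr (\<alpha> - 1) / (\<alpha> - 1) * P"
    unfolding B_t[symmetric] by (simp add: mult_ac)
  finally have N_powr: "B * real N powr (1 - \<alpha>) / (\<alpha> - 1) \<le> 2 powr (\<alpha> - 1) / (\<alpha> - 1) * P" .
  have "(\<Sum>k<n. r k) \<le> real N * A + B * real N powr (1 - \<alpha>) / (\<alpha> - 1)"
    using sum_le_split_bound[OF \<open>\<alpha> > 1\<close> \<open>N \<ge> 1\<close> r_nonneg r_le weighted_r_le] .
  also have "\<dots> \<le> t * A + 2 powr (\<alpha> - 1) / (\<alpha> - 1) * P"
    using \<open>real N \<le> t\<close> \<open>A > 0\<close> N_powr by (intro add_mono mult_right_mono) auto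
  also have "\<dots> = (1 + 2 powr (\<alpha> - 1) / (\<alpha> - 1)) * P"
    by (simp add: t_A distrib_right)
  finally show ?thesis
    by (simp add: P_def mult.assoc)
qed

lemma suminf_le_interpolation_ennreal:
  fixes \<alpha> :: real and a :: "nat \<Rightarrow> ennreal"
  defines "W \<equiv> (SUP k. ennreal ((real k + 1) powr \<alpha>) * a k)"
  assumes "\<alpha> > 1" and "W < \<infinity>"
  shows "(\<Sum>k. a k) \<le> ennreal ((1 + 2 powr (\<alpha> - 1) / (\<alpha> - 1))
           * enn2real (SUP k. a k) powr (1 - 1 / \<alpha>) * enn2real W powr (1 / \<alpha>))"
proof -
  have weighted_le: "ennreal ((real k + 1) powr \<alpha>) * a k \<le> W" for k
    unfolding W_def by (rule SUP_upper) simp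
  have "a k \<le> ennreal ((real k + 1) powr \<alpha>) * a k" for k
    using mult_right_mono[of "ennreal 1" "ennreal ((real k + 1) powr \<alpha>)" "a k"] \<open>\<alpha> > 1\<close>
    by (simp add: ge_one_powr_ge_zero)
  then have a_le: "a k \<le> W" for k
    using weighted_le order_trans by blast
  then have sup_le: "(SUP k. a k) \<le> W"
    by (rule SUP_least)
  have a_eq: "ennreal (enn2real (a k)) = a k" for k
    using le_less_trans[OF a_le \<open>W < \<infinity>\<close>] by (simp add: less_top)
  have "(\<Sum>k<n. enn2real (a k)) \<le> (1 + 2 powr (\<alpha> - 1) / (\<alpha> - 1))
           * enn2real (SUP k. a k) powr (1 - 1 / \<alpha>) * enn2real W powr (1 / \<alpha>)" for n
  proof (rule sum_le_interpolation[OF \<open>\<alpha> > 1\<close>])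
    show "enn2real (a k) \<le> enn2real (SUP k. a k)" for k
      using sup_le \<open>W < \<infinity>\<close> by (intro enn2real_mono) (auto intro: SUP_upper)
    show "(real k + 1) powr \<alpha> * enn2real (a k) \<le> enn2real W" for k
      using enn2real_mono[OF weighted_le[of k]] \<open>W < \<infinity>\<close> by (simp add: enn2real_mult)
    show "enn2real (SUP k. a k) \<le> enn2real W"
      using sup_le \<open>W < \<infinity>\<close> by (intro enn2real_mono) auto
  qed simp
  then have "ennreal (\<Sum>k<n. enn2real (a k)) \<le> ennreal ((1 + 2 powr (\<alpha> - 1) / (\<alpha> - 1))
           * enn2real (SUP k. a k) powr (1 - 1 / \<alpha>) * enn2real W powr (1 / \<alpha>))" for n
    by (rule ennreal_leI)
  then show ?thesis
    unfolding suminf_eq_SUP by (intro SUP_least) (simp add: sum_ennreal[symmetric] a_eq)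
qed

theorem lemma2p5:
  fixes chi :: "real^'n::finite \<Rightarrow> real" and \<alpha> :: real
  assumes "LP_cutoff chi" and "\<alpha> > 1"
  shows "\<exists>C>0. \<forall>f :: real^'n \<Rightarrow> complex.
           f \<in> borel_measurable lborel \<longrightarrow> bounded (range f) \<longrightarrow>
           besov_log_inf_inf chi 0 \<alpha> f < \<infinity> \<longrightarrow>
           besov_log_inf_1 chi 0 0 f \<le>
             ennreal (C * enn2real (besov_log_inf_inf chi 0 0 f) powr (1 - 1 / \<alpha>)
                        * enn2real (besov_log_inf_inf chi 0 \<alpha> f) powr (1 / \<alpha>))"
proof (intro exI[of _ "1 + 2 powr (\<alpha> - 1) / (\<alpha> - 1)"] conjI allI impI)
  show "0 < 1 + 2 powr (\<alpha> - 1) / (\<alpha> - 1)"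
    using \<open>\<alpha> > 1\<close> by (simp add: add_pos_nonneg)
qed (use suminf_le_interpolation_ennreal[OF \<open>\<alpha> > 1\<close>] in
      \<open>simp add: besov_log_inf_inf_def besov_log_inf_1_def\<close>)

end
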